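(* Let $p>q\ge 0$ be integers and let $P$, $Q$ be orthogonal projections on an $N$-dimensional real inner product space with ranks $p$ and $q$ respectively. Then there exist orthogonal projections $P'$ and $Q'$ of ranks $p-1$ and $q+1$ respectively such that $P+Q=P'+Q'$. *)

theory Defs
  imports "HOL-Analysis.Analysis"
begin

definition orth_proj :: "('a::euclidean_space \<Rightarrow> 'a) \<Rightarrow> bool" where
  "orth_proj P \<longleftrightarrow> linear P \<and> P \<circ> P = P \<and> (\<forall>x y. inner (P x) y = inner x (P y))"

definition op_rank :: "('a::euclidean_space \<Rightarrow> 'a) \<Rightarrow> nat" where
  "op_rank P = dim (range P)"

end

theory Submission
  imports Defs
begin

text \<open>Since \<open>q < p\<close>, the range of \<open>P\<close> contains a unit vector \<open>v\<close> in the kernel of \<open>Q\<close>.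
  Moving the rank-one projection \<open>z \<mapsto> \<langle>v, z\<rangle> v\<close> from \<open>P\<close> to \<open>Q\<close> keeps the sum fixed:
  \<open>P - vv\<^sup>T\<close> projects onto the orthogonal complement of \<open>v\<close> in the range of \<open>P\<close>,
  and \<open>Q + vv\<^sup>T\<close> projects onto the range of \<open>Q\<close> extended by \<open>v\<close>.\<close>

lemma orth_projD:
  assumes "orth_proj P"
  shows orth_proj_linear: "linear P"
    and orth_proj_idem: "P (P x) = P x"
    and orth_proj_adjoint: "inner (P x) y = inner x (P y)"
  using assms unfolding orth_proj_def by (auto simp: fun_eq_iff)

lemma orth_proj_range_iff: "orth_proj P \<Longrightarrow> x \<in> range P \<longleftrightarrow> P x = x"
  by (metis orth_proj_idem rangeE rangeI)

lemma subspace_range_linear: "linear f \<Longrightarrow> subspace (range f)"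
  using linear_subspace_image subspace_UNIV by blast

lemma span_range_linear: "linear f \<Longrightarrow> span (range f) = range f"
  using subspace_range_linear span_eq_iff by blast

lemma linear_rank_one: "linear (\<lambda>z. inner v z *\<^sub>R v)"
  by (simp add: linear_iff inner_add_right scaleR_add_left)

lemma orth_proj_remove_unit_vector:
  assumes P: "orth_proj P" and v: "norm v = 1" "P v = v"
  defines "P' \<equiv> \<lambda>z. P z - inner v z *\<^sub>R v"
  shows "orth_proj P'" and "op_rank P' = op_rank P - 1"
proof -
  have vv: "inner v v = 1" using v by (simp add: dot_square_norm)
  have vP: "inner v (P z) = inner v z" for z
    using orth_proj_adjoint[OF P, of v z] v by simp
  have P'P': "P' (P' z) = P' z" for z
    using orth_proj_linear[OF P] orth_proj_idem[OF P] v vP vv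
    by (simp add: P'_def linear_diff linear_scale inner_diff_right algebra_simps)
  show proj: "orth_proj P'"
    unfolding orth_proj_def
  proof (intro conjI allI)
    show "linear P'"
      unfolding P'_def using orth_proj_linear[OF P] linear_rank_one by (rule linear_compose_sub)
    show "P' \<circ> P' = P'" using P'P' by auto
    show "inner (P' x) y = inner x (P' y)" for x y
      using orth_proj_adjoint[OF P, of x y]
      by (simp add: P'_def inner_diff_left inner_diff_right inner_commute)
  qed
  have "range P = span (insert v (range P'))"
  proof
    show "range P \<subseteq> span (insert v (range P'))"
    proof clarify
      fix z
      have "P z = P' z + inner v z *\<^sub>R v" by (simp add: P'_def)
      then show "P z \<in> span (insert v (range P'))"
        by (metis insertI1 insertI2 rangeI span_add span_base span_scale)
    qed
    have "insert v (range P') \<subseteq> range P"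
      using v by (auto simp: P'_def orth_proj_range_iff[OF P] orth_proj_linear[OF P] orth_proj_idem[OF P]
          linear_diff linear_scale)
    then show "span (insert v (range P')) \<subseteq> range P"
      using span_minimal subspace_range_linear[OF orth_proj_linear[OF P]] by blast
  qed
  moreover have "v \<notin> span (range P')"
  proof
    assume "v \<in> span (range P')"
    then have "P' v = v"
      using orth_proj_range_iff[OF proj] span_range_linear[OF orth_proj_linear[OF proj]] by simp
    then show False using v vv by (simp add: P'_def)
  qed
  ultimately show "op_rank P' = op_rank P - 1"
    by (simp add: op_rank_def dim_insert)
qed

lemma orth_proj_add_unit_vector:
  assumes Q: "orth_proj Q" and v: "norm v = 1" "Q v = 0"
  defines "Q' \<equiv> \<lambda>z. Q z + inner v z *\<^sub>R v"
  shows "orth_proj Q'" and "op_rank Q' = op_rank Q + 1"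
proof -
  have vv: "inner v v = 1" using v by (simp add: dot_square_norm)
  have vQ: "inner v (Q z) = 0" for z
    using orth_proj_adjoint[OF Q, of v z] v by simp
  have Q'Q: "Q' (Q z + c *\<^sub>R v) = Q z + c *\<^sub>R v" for z c
    using orth_proj_linear[OF Q] orth_proj_idem[OF Q] v vQ vv
    by (simp add: Q'_def linear_add linear_scale inner_add_right)
  show proj: "orth_proj Q'"
    unfolding orth_proj_def
  proof (intro conjI allI)
    show "linear Q'"
      unfolding Q'_def using orth_proj_linear[OF Q] linear_rank_one by (rule linear_compose_add)
    show "Q' \<circ> Q' = Q'" using Q'Q by (auto simp: Q'_def)
    show "inner (Q' x) y = inner x (Q' y)" for x y
      using orth_proj_adjoint[OF Q, of x y]
      by (simp add: Q'_def inner_add_left inner_add_right inner_commute)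
  qed
  have "range Q' = span (insert v (range Q))"
  proof
    show "range Q' \<subseteq> span (insert v (range Q))"
    proof clarify
      fix z
      have "Q z \<in> span (insert v (range Q))" "v \<in> span (insert v (range Q))"
        by (simp_all add: span_base)
      then show "Q' z \<in> span (insert v (range Q))"
        unfolding Q'_def by (intro span_add span_scale)
    qed
    show "span (insert v (range Q)) \<subseteq> range Q'"
    proof
      fix x assume "x \<in> span (insert v (range Q))"
      then obtain c where "x - c *\<^sub>R v \<in> range Q"
        using span_range_linear[OF orth_proj_linear[OF Q]] by (auto simp: span_breakdown_eq)
      then obtain z where "x = Q z + c *\<^sub>R v" by (metis diff_add_cancel rangeE)
      then show "x \<in> range Q'" using Q'Q by (metis rangeI)
    qed
  qed
  moreover have "v \<notin> span (range Q)"
  proof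
    assume "v \<in> span (range Q)"
    then have "Q v = v"
      using orth_proj_range_iff[OF Q] span_range_linear[OF orth_proj_linear[OF Q]] by simp
    then show False using v by auto
  qed
  ultimately show "op_rank Q' = op_rank Q + 1"
    by (simp add: op_rank_def dim_insert)
qed

lemma exists_unit_vector_in_kernel:
  fixes f :: "'a::euclidean_space \<Rightarrow> 'b::euclidean_space"
  assumes f: "linear f" and S: "subspace S" and dim: "dim (range f) < dim S"
  obtains v where "v \<in> S" "norm v = 1" "f v = 0"
proof -
  have "\<not> inj_on f S"
  proof
    assume "inj_on f S"
    then have "dim (f ` S) = dim S" using dim_image_eq[OF f] S by (metis span_eq_iff)
    moreover have "dim (f ` S) \<le> dim (range f)" by (simp add: dim_subset image_mono)
    ultimately show False using dim by simp
  qed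
  then obtain x y where xy: "x \<in> S" "y \<in> S" "x \<noteq> y" "f x = f y"
    unfolding inj_on_def by blast
  define u where "u = x - y"
  have "u \<in> S" "u \<noteq> 0" "f u = 0"
    using xy S f by (simp_all add: u_def subspace_diff linear_diff)
  then show thesis
    using S f by (intro that[of "u /\<^sub>R norm u"]) (simp_all add: subspace_scale linear_scale)
qed

theorem lemma2p4:
  fixes P Q :: "'a::euclidean_space \<Rightarrow> 'a" and p q :: nat
  assumes "p > q"
    and "orth_proj P" and "op_rank P = p"
    and "orth_proj Q" and "op_rank Q = q"
  shows "\<exists>P' Q'. orth_proj P' \<and> op_rank P' = p - 1 \<and> orth_proj Q' \<and> op_rank Q' = q + 1
           \<and> (\<forall>x. P x + Q x = P' x + Q' x)"
proof -
  have "dim (range Q) < dim (range P)" using assms(1,3,5) by (simp add: op_rank_def)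
  then obtain v where v: "v \<in> range P" "norm v = 1" "Q v = 0"
    using exists_unit_vector_in_kernel[OF orth_proj_linear[OF assms(4)]
        subspace_range_linear[OF orth_proj_linear[OF assms(2)]]] by blast
  then have "P v = v" using orth_proj_range_iff[OF assms(2)] by blast
  let ?P' = "\<lambda>z. P z - inner v z *\<^sub>R v" and ?Q' = "\<lambda>z. Q z + inner v z *\<^sub>R v"
  have "orth_proj ?P'" "op_rank ?P' = p - 1"
    using orth_proj_remove_unit_vector[OF assms(2) \<open>norm v = 1\<close> \<open>P v = v\<close>] assms(3) by simp_all
  moreover have "orth_proj ?Q'" "op_rank ?Q' = q + 1"
    using orth_proj_add_unit_vector[OF assms(4) \<open>norm v = 1\<close> \<open>Q v = 0\<close>] assms(5) by simp_all
  moreover have "\<forall>x. P x + Q x = ?P' x + ?Q' x" by simp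
  ultimately show ?thesis by blast
qed

end
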